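(* Let $G$ and $H$ be finite groups. Then $A_G(t)=A_H(t)$ if and only if $G$ and $H$ have the same class equation.
   Context: For a finite group $G$ and an integer $n\ge 0$, $G$ acts on the Cartesian power $G^n$ by simultaneous conjugation $g\cdot(x_1,\dots,x_n)=(gx_1g^{-1},\dots,gx_ng^{-1})$. Let $\alpha_{G,n}$ denote the number of $G$-orbits on $G^n$ (so $\alpha_{G,0}=1$), and let $A_G(t)=\sum_{n\ge 0}\alpha_{G,n}t^n$ (a formal power series, which is a rational function of $t$). Two finite groups $G$ and $H$ have the same class equation if $|G|=|H|$ and the multiset of cardinalities of the conjugacy classes of $G$ equals that of $H$ (equivalently, for every $m$, the number of elements whose centralizer has order $m$ is the same in $G$ and in $H$). *)

theory Defs
  imports "HOL-Algebra.Group_Action" "HOL-Computational_Algebra.Formal_Power_Series"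
    "HOL-Library.Multiset"
begin

text \<open>Simultaneous conjugation action of G on G^n, where G^n is modelled as the
  extensional functions from {..<n} to carrier G.\<close>
definition sim_conj :: "('a, 'b) monoid_scheme \<Rightarrow> nat \<Rightarrow> 'a \<Rightarrow> (nat \<Rightarrow> 'a) \<Rightarrow> (nat \<Rightarrow> 'a)" where
  "sim_conj G n g = (\<lambda>x \<in> (\<Pi>\<^sub>E i\<in>{..<n}. carrier G).
      (\<lambda>i\<in>{..<n}. g \<otimes>\<^bsub>G\<^esub> x i \<otimes>\<^bsub>G\<^esub> inv\<^bsub>G\<^esub> g))"

definition alpha :: "('a, 'b) monoid_scheme \<Rightarrow> nat \<Rightarrow> nat" where
  "alpha G n = card (orbits G (\<Pi>\<^sub>E i\<in>{..<n}. carrier G) (sim_conj G n))"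

definition A_series :: "('a, 'b) monoid_scheme \<Rightarrow> int fps" where
  "A_series G = Abs_fps (\<lambda>n. int (alpha G n))"

definition conj_classes :: "('a, 'b) monoid_scheme \<Rightarrow> 'a set set" where
  "conj_classes G = orbits G (carrier G) (\<lambda>g x. g \<otimes>\<^bsub>G\<^esub> x \<otimes>\<^bsub>G\<^esub> inv\<^bsub>G\<^esub> g)"

definition same_class_equation :: "('a, 'b) monoid_scheme \<Rightarrow> ('c, 'd) monoid_scheme \<Rightarrow> bool" where
  "same_class_equation G H \<longleftrightarrow>
     order G = order H \<and>
     image_mset card (mset_set (conj_classes G)) = image_mset card (mset_set (conj_classes H))"

end

theory Submission
  imports Defs "HOL-Computational_Algebra.Polynomial"
begin

hide_const (open) Polynomial.order

text \<open>By Burnside's lemma, \<open>\<alpha>\<^sub>G\<^sub>,\<^sub>n \<cdot> |G| = \<Sum>\<^sub>g |C\<^sub>G(g)|\<^sup>n = \<Sum>\<^sub>d D\<^sub>G(d) d\<^sup>n\<close>,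
  where \<open>D\<^sub>G(d)\<close> counts the elements whose centralizer has order \<open>d\<close>. Since the power
  functions \<open>n \<mapsto> d\<^sup>n\<close> are linearly independent, equal series force
  \<open>|H| D\<^sub>G = |G| D\<^sub>H\<close>; evaluating at \<open>d = max(|G|,|H|)\<close>, where one side counts central
  elements and is positive, gives \<open>|G| = |H|\<close> and then \<open>D\<^sub>G = D\<^sub>H\<close>. Finally \<open>D\<^sub>G\<close> and the
  class equation determine each other, because an element has a class of size \<open>k\<close>
  exactly when its centralizer has order \<open>|G|/k\<close>.\<close>

lemma group_actionI:
  fixes G (structure)
  assumes "group G"
    and ext: "\<And>g. g \<in> carrier G \<Longrightarrow> \<phi> g \<in> extensional E"
    and closed: "\<And>g x. g \<in> carrier G \<Longrightarrow> x \<in> E \<Longrightarrow> \<phi> g x \<in> E"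
    and one: "\<And>x. x \<in> E \<Longrightarrow> \<phi> \<one> x = x"
    and mult: "\<And>g h x. g \<in> carrier G \<Longrightarrow> h \<in> carrier G \<Longrightarrow> x \<in> E \<Longrightarrow> \<phi> (g \<otimes> h) x = \<phi> g (\<phi> h x)"
  shows "group_action G E \<phi>"
proof -
  interpret group G by fact
  have bij: "\<phi> g \<in> Bij E" if g: "g \<in> carrier G" for g
  proof -
    have "bij_betw (\<phi> g) E E"
    proof (rule bij_betwI[where g = "\<phi> (inv g)"])
      show "\<phi> (inv g) (\<phi> g x) = x" "\<phi> g (\<phi> (inv g) x) = x" if "x \<in> E" for x
        using mult[of "inv g" g x] mult[of g "inv g" x] one[of x] g that by simp_all
    qed (use closed g in auto)
    then show ?thesis
      using ext g unfolding Bij_def by auto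
  qed
  have "\<phi> \<in> hom G (BijGroup E)"
  proof (rule homI)
    show "\<phi> g \<in> carrier (BijGroup E)" if "g \<in> carrier G" for g
      using bij that by (simp add: BijGroup_def)
    show "\<phi> (g \<otimes> h) = \<phi> g \<otimes>\<^bsub>BijGroup E\<^esub> \<phi> h" if "g \<in> carrier G" "h \<in> carrier G" for g h
    proof -
      have "\<phi> (g \<otimes> h) = compose E (\<phi> g) (\<phi> h)"
        by (rule extensionalityI[OF ext]) (use that mult in \<open>simp_all add: compose_def\<close>)
      then show ?thesis
        using bij that by (simp add: BijGroup_def)
    qed
  qed
  then show ?thesis
    unfolding group_action_def group_hom_def
    by (simp add: group_BijGroup group_hom_axioms.intro \<open>group G\<close>)
qed

text \<open>Multiply by \<open>\<Prod>\<^sub>t\<^sub>\<noteq>\<^sub>s (x - t)\<close>, a polynomial that vanishes on \<open>S\<close> except at \<open>s\<close>.\<close>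
lemma power_sum_weights_eq_0:
  fixes w :: "'a::idom \<Rightarrow> 'a"
  assumes "finite S" and power_sums: "\<And>n. (\<Sum>x\<in>S. w x * x ^ n) = 0" and "s \<in> S"
  shows "w s = 0"
proof -
  define P where "P = (\<Prod>t\<in>S - {s}. [:-t, 1:])"
  have poly_P: "poly P x = (\<Prod>t\<in>S - {s}. x - t)" for x
    unfolding P_def by (simp add: poly_prod)
  have "(\<Sum>x\<in>S. w x * poly P x) = (\<Sum>i\<le>degree P. coeff P i * (\<Sum>x\<in>S. w x * x ^ i))"
    by (simp add: poly_altdef sum_distrib_left sum_distrib_right mult_ac sum.swap[of _ S])
  also have "\<dots> = 0"
    using power_sums by simp
  finally have "(\<Sum>x\<in>S. w x * poly P x) = 0" .
  moreover have "poly P x = 0" if "x \<in> S - {s}" for x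
    unfolding poly_P using \<open>finite S\<close> that by (auto intro!: prod_zero bexI[of _ x])
  ultimately have "w s * poly P s = 0"
    using \<open>finite S\<close> \<open>s \<in> S\<close> by (simp add: sum.remove)
  moreover have "poly P s \<noteq> 0"
    unfolding poly_P using \<open>finite S\<close> by (simp add: prod_zero_iff)
  ultimately show ?thesis
    by simp
qed

lemma sum_comp_eq_sum_card_fibres:
  assumes "finite A" "finite S" "c ` A \<subseteq> S"
  shows "(\<Sum>x\<in>A. f (c x)) = (\<Sum>d\<in>S. card {x\<in>A. c x = d} * (f d :: nat))"
  using sum.group[OF assms, of "\<lambda>x. f (c x)"] by simp

lemma count_image_mset_set:
  assumes "finite A"
  shows "count (image_mset f (mset_set A)) k = card {x\<in>A. f x = k}"
  using assms by (simp add: count_image_mset' Collect_conj_eq conj_commute eq_commute)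

definition centralizer :: "('a, 'b) monoid_scheme \<Rightarrow> 'a \<Rightarrow> 'a set" where
  "centralizer G g = {h \<in> carrier G. g \<otimes>\<^bsub>G\<^esub> h = h \<otimes>\<^bsub>G\<^esub> g}"

definition conj_class :: "('a, 'b) monoid_scheme \<Rightarrow> 'a \<Rightarrow> 'a set" where
  "conj_class G x = orbit G (\<lambda>g x. g \<otimes>\<^bsub>G\<^esub> x \<otimes>\<^bsub>G\<^esub> inv\<^bsub>G\<^esub> g) x"

lemma conj_classes_eq_image_conj_class: "conj_classes G = conj_class G ` carrier G"
  unfolding conj_classes_def orbits_def conj_class_def by auto

context group
begin

lemma conj_eq_self_iff_commute:
  assumes "g \<in> carrier G" "x \<in> carrier G"
  shows "g \<otimes> x \<otimes> inv g = x \<longleftrightarrow> g \<otimes> x = x \<otimes> g"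
  using assms by (metis inv_closed inv_solve_right m_closed)

lemma centralizer_subset: "centralizer G g \<subseteq> carrier G"
  unfolding centralizer_def by auto

lemma centralizer_one: "centralizer G \<one> = carrier G"
  unfolding centralizer_def by auto

lemma conj_class_subset: "g \<in> carrier G \<Longrightarrow> conj_class G g \<subseteq> carrier G"
  unfolding conj_class_def orbit_def by auto

lemma conj_class_in_conj_classes: "g \<in> carrier G \<Longrightarrow> conj_class G g \<in> conj_classes G"
  unfolding conj_classes_eq_image_conj_class by (rule imageI)

lemma conj_classes_subset: "K \<in> conj_classes G \<Longrightarrow> K \<subseteq> carrier G"
  unfolding conj_classes_eq_image_conj_class using conj_class_subset by blast

interpretation conjugation: group_action G "carrier G" "\<lambda>g. \<lambda>x\<in>carrier G. g \<otimes> x \<otimes> inv g"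
  by (rule action_by_conjugation)

lemma conj_class_eq_orbit:
  "x \<in> carrier G \<Longrightarrow> conj_class G x = orbit G (\<lambda>g. \<lambda>x\<in>carrier G. g \<otimes> x \<otimes> inv g) x"
  unfolding conj_class_def orbit_def by auto

lemma conj_classes_eq_orbits:
  "conj_classes G = orbits G (carrier G) (\<lambda>g. \<lambda>x\<in>carrier G. g \<otimes> x \<otimes> inv g)"
  unfolding conj_classes_eq_image_conj_class orbits_def by (auto simp: conj_class_eq_orbit)

lemma self_in_conj_class: "g \<in> carrier G \<Longrightarrow> g \<in> conj_class G g"
  using conjugation.orbit_refl conj_class_eq_orbit by auto

lemma conj_classes_disjoint:
  "K \<in> conj_classes G \<Longrightarrow> K' \<in> conj_classes G \<Longrightarrow> K \<noteq> K' \<Longrightarrow> K \<inter> K' = {}"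
  using conjugation.disjoint_union unfolding conj_classes_eq_orbits by blast

lemma conj_class_eq_if_mem:
  assumes "K \<in> conj_classes G" "g \<in> K"
  shows "conj_class G g = K"
proof -
  have "g \<in> carrier G"
    using assms conj_classes_subset by blast
  then have "conj_class G g \<in> conj_classes G" "g \<in> conj_class G g \<inter> K"
    using assms(2) self_in_conj_class conj_class_in_conj_classes by auto
  then show ?thesis
    using conj_classes_disjoint assms(1) by blast
qed

lemma card_conj_class_mult_card_centralizer:
  assumes "g \<in> carrier G"
  shows "card (conj_class G g) * card (centralizer G g) = order G"
proof -
  have "stabilizer G (\<lambda>g. \<lambda>x\<in>carrier G. g \<otimes> x \<otimes> inv g) g = centralizer G g"
    using assms conj_eq_self_iff_commute
    unfolding stabilizer_def centralizer_def by auto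
  then show ?thesis
    using conjugation.orbit_stabilizer_theorem[OF assms] conj_class_eq_orbit[OF assms] by simp
qed

lemma simultaneous_conjugation_action:
  "group_action G (\<Pi>\<^sub>E i\<in>{..<n}. carrier G) (sim_conj G n)"
proof (rule group_actionI)
  show "sim_conj G n g x \<in> (\<Pi>\<^sub>E i\<in>{..<n}. carrier G)"
    if "g \<in> carrier G" "x \<in> (\<Pi>\<^sub>E i\<in>{..<n}. carrier G)" for g x
    using that unfolding sim_conj_def by auto
  show "sim_conj G n \<one> x = x" if "x \<in> (\<Pi>\<^sub>E i\<in>{..<n}. carrier G)" for x
    using that unfolding sim_conj_def by (auto simp: PiE_iff extensional_def)
  show "sim_conj G n (g \<otimes> h) x = sim_conj G n g (sim_conj G n h x)"
    if "g \<in> carrier G" "h \<in> carrier G" "x \<in> (\<Pi>\<^sub>E i\<in>{..<n}. carrier G)" for g h x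
    using that unfolding sim_conj_def
    by (auto simp: inv_mult_group m_assoc PiE_iff intro!: restrict_ext)
qed (auto simp: sim_conj_def is_group)

lemma invariants_sim_conj:
  assumes "g \<in> carrier G"
  shows "invariants (\<Pi>\<^sub>E i\<in>{..<n}. carrier G) (sim_conj G n) g = (\<Pi>\<^sub>E i\<in>{..<n}. centralizer G g)"
proof -
  have "sim_conj G n g x = x \<longleftrightarrow> (\<forall>i<n. x i \<in> centralizer G g)"
    if "x \<in> (\<Pi>\<^sub>E i\<in>{..<n}. carrier G)" for x
    using that assms conj_eq_self_iff_commute unfolding sim_conj_def centralizer_def
    by (auto simp: PiE_iff extensional_def fun_eq_iff)
  moreover have "x \<in> (\<Pi>\<^sub>E i\<in>{..<n}. centralizer G g) \<longleftrightarrow>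
      x \<in> (\<Pi>\<^sub>E i\<in>{..<n}. carrier G) \<and> (\<forall>i<n. x i \<in> centralizer G g)" for x
    using centralizer_subset by (auto simp: PiE_iff)
  ultimately show ?thesis
    unfolding invariants_def by blast
qed

lemma alpha_mult_order:
  assumes "finite (carrier G)"
  shows "alpha G n * order G = (\<Sum>g\<in>carrier G. card (centralizer G g) ^ n)"
proof -
  interpret simultaneous: group_action G "\<Pi>\<^sub>E i\<in>{..<n}. carrier G" "sim_conj G n"
    by (rule simultaneous_conjugation_action)
  have "alpha G n * order G =
      (\<Sum>g\<in>carrier G. card (invariants (\<Pi>\<^sub>E i\<in>{..<n}. carrier G) (sim_conj G n) g))"
    unfolding alpha_def by (rule simultaneous.burnside) (simp_all add: assms finite_PiE)
  also have "\<dots> = (\<Sum>g\<in>carrier G. card (centralizer G g) ^ n)"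
    by (simp add: invariants_sim_conj card_PiE)
  finally show ?thesis .
qed

end

definition centralizer_count :: "('a, 'b) monoid_scheme \<Rightarrow> nat \<Rightarrow> nat" where
  "centralizer_count G d = card {g \<in> carrier G. card (centralizer G g) = d}"

definition class_size_count :: "('a, 'b) monoid_scheme \<Rightarrow> nat \<Rightarrow> nat" where
  "class_size_count G k = card {g \<in> carrier G. card (conj_class G g) = k}"

locale finite_group = group +
  assumes finite_carrier: "finite (carrier G)"
begin

lemma order_pos: "0 < order G"
  using finite_carrier order_gt_0_iff_finite by blast

lemma card_centralizer_le_order: "card (centralizer G g) \<le> order G"
  unfolding Coset.order_def by (rule card_mono[OF finite_carrier centralizer_subset])

lemma card_conj_class_pos:
  assumes "g \<in> carrier G"
  shows "0 < card (conj_class G g)"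
proof -
  have "finite (conj_class G g)"
    using conj_class_subset[OF assms] finite_carrier by (rule finite_subset)
  then show ?thesis
    using self_in_conj_class[OF assms] card_gt_0_iff by blast
qed

lemma finite_conj_classes: "finite (conj_classes G)"
  unfolding conj_classes_eq_image_conj_class using finite_carrier by simp

lemma alpha_mult_order_eq_sum_centralizer_count:
  assumes "order G \<le> N"
  shows "alpha G n * order G = (\<Sum>d\<le>N. centralizer_count G d * d ^ n)"
  unfolding alpha_mult_order[OF finite_carrier] centralizer_count_def
  by (rule sum_comp_eq_sum_card_fibres)
    (use finite_carrier card_centralizer_le_order assms in \<open>auto intro: le_trans\<close>)

lemma centralizer_count_order_pos: "0 < centralizer_count G (order G)"
proof -
  have "\<one> \<in> {g \<in> carrier G. card (centralizer G g) = order G}"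
    by (simp add: centralizer_one Coset.order_def)
  then show ?thesis
    unfolding centralizer_count_def using finite_carrier by (auto simp: card_gt_0_iff)
qed

lemma class_size_count_eq_centralizer_count:
  assumes "k dvd order G"
  shows "class_size_count G k = centralizer_count G (order G div k)"
proof -
  have "card (conj_class G g) = k \<longleftrightarrow> card (centralizer G g) = order G div k"
    if "g \<in> carrier G" for g
  proof
    assume "card (conj_class G g) = k"
    then have "order G = k * card (centralizer G g)" "k \<noteq> 0"
      using card_conj_class_mult_card_centralizer[OF that] card_conj_class_pos[OF that] by auto
    then show "card (centralizer G g) = order G div k"
      by simp
  next
    assume "card (centralizer G g) = order G div k"
    then have "card (conj_class G g) * (order G div k) = k * (order G div k)"
      using card_conj_class_mult_card_centralizer[OF that] assms by simp
    moreover have "order G div k \<noteq> 0"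
      using assms order_pos by (auto elim: dvdE)
    ultimately show "card (conj_class G g) = k"
      by simp
  qed
  then show ?thesis
    unfolding class_size_count_def centralizer_count_def by (metis (mono_tags, lifting))
qed

lemma class_size_count_eq_0:
  assumes "\<not> k dvd order G"
  shows "class_size_count G k = 0"
proof -
  have "{g \<in> carrier G. card (conj_class G g) = k} = {}"
    using assms card_conj_class_mult_card_centralizer by (metis (mono_tags, lifting) Collect_empty_eq dvd_triv_left)
  then show ?thesis
    unfolding class_size_count_def by (metis card.empty)
qed

lemma centralizer_count_eq_0:
  assumes "\<not> d dvd order G"
  shows "centralizer_count G d = 0"
proof -
  have "{g \<in> carrier G. card (centralizer G g) = d} = {}"
    using assms card_conj_class_mult_card_centralizer by (metis (mono_tags, lifting) Collect_empty_eq dvd_triv_right)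
  then show ?thesis
    unfolding centralizer_count_def by (metis card.empty)
qed

lemma class_size_count_eq_mult_count:
  "class_size_count G k = k * count (image_mset card (mset_set (conj_classes G))) k"
proof -
  let ?C = "{K \<in> conj_classes G. card K = k}"
  have "{g \<in> carrier G. card (conj_class G g) = k} = \<Union>?C"
  proof (intro equalityI subsetI)
    fix g assume "g \<in> {g \<in> carrier G. card (conj_class G g) = k}"
    then show "g \<in> \<Union>?C"
      using self_in_conj_class conj_class_in_conj_classes by blast
  next
    fix g assume "g \<in> \<Union>?C"
    then obtain K where "K \<in> conj_classes G" "card K = k" "g \<in> K"
      by blast
    then show "g \<in> {g \<in> carrier G. card (conj_class G g) = k}"
      using conj_class_eq_if_mem conj_classes_subset by blast
  qed
  moreover have "card (\<Union>?C) = sum card ?C"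
  proof (rule card_Union_disjoint)
    show "pairwise disjnt ?C"
      using conj_classes_disjoint unfolding pairwise_def disjnt_def by auto
    show "finite K" if "K \<in> ?C" for K
      using that conj_classes_subset finite_carrier finite_subset by blast
  qed
  ultimately have "class_size_count G k = sum card ?C"
    unfolding class_size_count_def by simp
  then show ?thesis
    by (simp add: count_image_mset_set[OF finite_conj_classes])
qed

lemma count_class_sizes_0: "count (image_mset card (mset_set (conj_classes G))) 0 = 0"
proof -
  have "{K \<in> conj_classes G. card K = 0} = {}"
    using card_conj_class_pos by (auto simp: conj_classes_eq_image_conj_class)
  then show ?thesis
    by (simp only: count_image_mset_set[OF finite_conj_classes] card.empty)
qed

end

lemma scaled_centralizer_counts_eq_if_alpha_eq:
  assumes "finite_group G" "finite_group H" and alpha_eq: "\<And>n. alpha G n = alpha H n"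
  shows "order H * centralizer_count G d = order G * centralizer_count H d"
proof -
  interpret G: finite_group G by fact
  interpret H: finite_group H by fact
  define N where "N = max (order G) (order H)"
  have N: "order G \<le> N" "order H \<le> N"
    by (simp_all add: N_def)
  show ?thesis
  proof (cases "d \<le> N")
    case False
    then have "\<not> d dvd order G" "\<not> d dvd order H"
      using G.order_pos H.order_pos N by (auto dest: dvd_imp_le)
    then show ?thesis
      by (simp add: G.centralizer_count_eq_0 H.centralizer_count_eq_0)
  next
    case True
    define w where "w x = int (order H * centralizer_count G (nat x)) - int (order G * centralizer_count H (nat x))"
      for x :: int
    have "(\<Sum>x\<in>int ` {..N}. w x * x ^ n) = 0" for n
    proof -
      have "(\<Sum>x\<in>int ` {..N}. w x * x ^ n) = (\<Sum>d\<le>N. w (int d) * int d ^ n)"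
        by (simp add: sum.reindex)
      also have "\<dots> = int (order H * (\<Sum>d\<le>N. centralizer_count G d * d ^ n))
          - int (order G * (\<Sum>d\<le>N. centralizer_count H d * d ^ n))"
        unfolding w_def by (simp add: sum_subtractf sum_distrib_left algebra_simps)
      also have "\<dots> = 0"
        unfolding G.alpha_mult_order_eq_sum_centralizer_count[OF N(1), symmetric]
          H.alpha_mult_order_eq_sum_centralizer_count[OF N(2), symmetric] alpha_eq
        by (simp add: ac_simps)
      finally show ?thesis .
    qed
    then have "w (int d) = 0"
      by (rule power_sum_weights_eq_0[rotated]) (use True in auto)
    then show ?thesis
      unfolding w_def by (simp only: nat_int right_minus_eq of_nat_eq_iff)
  qed
qed

lemma order_le_if_scaled_centralizer_counts_eq:
  assumes "finite_group G" "finite_group H"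
    and "\<And>d. order H * centralizer_count G d = order G * centralizer_count H d"
  shows "order G \<le> order H"
proof (rule ccontr)
  interpret G: finite_group G by fact
  interpret H: finite_group H by fact
  assume "\<not> order G \<le> order H"
  then have "centralizer_count H (order G) = 0"
    using H.order_pos by (auto intro: H.centralizer_count_eq_0 dest: dvd_imp_le)
  then have "order H * centralizer_count G (order G) = 0"
    using assms(3) by simp
  then show False
    using G.centralizer_count_order_pos H.order_pos by simp
qed

lemma alpha_eq_iff_centralizer_counts_eq:
  assumes "finite_group G" "finite_group H"
  shows "(\<forall>n. alpha G n = alpha H n) \<longleftrightarrow>
    order G = order H \<and> (\<forall>d. centralizer_count G d = centralizer_count H d)"
proof
  interpret G: finite_group G by fact
  interpret H: finite_group H by fact
  assume "\<forall>n. alpha G n = alpha H n"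
  then have scaled: "order H * centralizer_count G d = order G * centralizer_count H d" for d
    using scaled_centralizer_counts_eq_if_alpha_eq[OF assms] by simp
  then have "order G = order H"
    using order_le_if_scaled_centralizer_counts_eq[OF assms] order_le_if_scaled_centralizer_counts_eq[OF assms(2,1)]
    by (metis le_antisym)
  then show "order G = order H \<and> (\<forall>d. centralizer_count G d = centralizer_count H d)"
    using scaled H.order_pos by simp
next
  interpret G: finite_group G by fact
  interpret H: finite_group H by fact
  assume "order G = order H \<and> (\<forall>d. centralizer_count G d = centralizer_count H d)"
  then have "alpha G n * order G = alpha H n * order G" for n
    using G.alpha_mult_order_eq_sum_centralizer_count[OF order_refl]
      H.alpha_mult_order_eq_sum_centralizer_count[OF order_refl] by simp
  then show "\<forall>n. alpha G n = alpha H n"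
    using G.order_pos by simp
qed

lemma class_size_counts_eq_iff_centralizer_counts_eq:
  assumes "finite_group G" "finite_group H" and order_eq: "order G = order H"
  shows "(\<forall>k. class_size_count G k = class_size_count H k) \<longleftrightarrow>
    (\<forall>d. centralizer_count G d = centralizer_count H d)"
proof -
  interpret G: finite_group G by fact
  interpret H: finite_group H by fact
  have "class_size_count G k = class_size_count H k"
    if "\<forall>d. centralizer_count G d = centralizer_count H d" for k
    using that order_eq
    by (cases "k dvd order G")
      (simp_all add: G.class_size_count_eq_centralizer_count H.class_size_count_eq_centralizer_count
        G.class_size_count_eq_0 H.class_size_count_eq_0)
  moreover have "centralizer_count G d = centralizer_count H d"
    if "\<forall>k. class_size_count G k = class_size_count H k" for d
  proof (cases "d dvd order G")
    case True
    then obtain e where "order G = d * e"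
      by (rule dvdE)
    then have "e dvd order G" "order G div e = d"
      using G.order_pos by auto
    then have "centralizer_count G d = class_size_count G e"
      "centralizer_count H d = class_size_count H e"
      using G.class_size_count_eq_centralizer_count H.class_size_count_eq_centralizer_count order_eq
      by simp_all
    then show ?thesis
      using that by simp
  next
    case False
    then show ?thesis
      using order_eq
      by (simp add: G.centralizer_count_eq_0 H.centralizer_count_eq_0)
  qed
  ultimately show ?thesis
    by blast
qed

lemma same_class_equation_iff_class_size_counts_eq:
  assumes "finite_group G" "finite_group H"
  shows "same_class_equation G H \<longleftrightarrow>
    order G = order H \<and> (\<forall>k. class_size_count G k = class_size_count H k)"
proof -
  interpret G: finite_group G by fact
  interpret H: finite_group H by fact
  have "count (image_mset card (mset_set (conj_classes G))) k =
      count (image_mset card (mset_set (conj_classes H))) k \<longleftrightarrow>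
    class_size_count G k = class_size_count H k" for k
    by (cases "k = 0")
      (simp_all add: G.count_class_sizes_0 H.count_class_sizes_0
        G.class_size_count_eq_mult_count H.class_size_count_eq_mult_count)
  then show ?thesis
    unfolding same_class_equation_def multiset_eq_iff by simp
qed

theorem theorem2p1:
  fixes G :: "('a, 'b) monoid_scheme" and H :: "('c, 'd) monoid_scheme"
  assumes "group G" and "finite (carrier G)"
      and "group H" and "finite (carrier H)"
  shows "A_series G = A_series H \<longleftrightarrow> same_class_equation G H"
proof -
  have G: "finite_group G" and H: "finite_group H"
    using assms by (simp_all add: finite_group_def finite_group_axioms_def)
  have "A_series G = A_series H \<longleftrightarrow> (\<forall>n. alpha G n = alpha H n)"
    by (simp add: A_series_def fps_eq_iff)
  also have "\<dots> \<longleftrightarrow> order G = order H \<and> (\<forall>d. centralizer_count G d = centralizer_count H d)"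
    by (rule alpha_eq_iff_centralizer_counts_eq[OF G H])
  also have "\<dots> \<longleftrightarrow> order G = order H \<and> (\<forall>k. class_size_count G k = class_size_count H k)"
    using class_size_counts_eq_iff_centralizer_counts_eq[OF G H] by blast
  also have "\<dots> \<longleftrightarrow> same_class_equation G H"
    by (rule same_class_equation_iff_class_size_counts_eq[OF G H, symmetric])
  finally show ?thesis .
qed

end
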